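(* Let $d\ge 2$, $\bm{\mu}=(\mu_1,\dots,\mu_d)^\top\in\mathbb{R}^d$, let $\bm{\Sigma}$ be a positive definite $d\times d$ matrix, $t\in\mathbb{R}$ and $\lambda>0$ with $(\min_{1\le i\le d}\mu_i-t)_-\le\lambda$. Let $\bm{e}=(1,\dots,1)^\top$ and $\mathcal{W}^+=\{\bm{w}\in\mathbb{R}^d:\bm{w}^\top\bm{e}=1,\ \bm{w}\ge 0\}$. Let $\mathcal{M}(\bm{\mu},\bm{\Sigma})$ be the set of probability distributions $G$ on $\mathbb{R}^d$ of a random vector $\bm{X}$ with $\mathbb{E}^G[\bm{X}]=\bm{\mu}$ and $\mathrm{Cov}^G[\bm{X}]=\bm{\Sigma}$, and $\mathcal{M}_S(\bm{\mu},\bm{\Sigma})$ its subset of symmetric distributions. For $\mathcal{M}\in\{\mathcal{M}(\bm{\mu},\bm{\Sigma}),\mathcal{M}_S(\bm{\mu},\bm{\Sigma})\}$ and $\bm{w}\in\mathcal{W}^+$, let $\mathcal{M}_{\bm{w},\lambda}=\{G\in\mathcal{M}:\mathbb{E}^G[(\bm{w}^\top\bm{X}-t)_-]\le\lambda\}$, and consider the problem $\min_{\bm{w}\in\mathcal{W}^+}\sup_{G\in\mathcal{M}_{\bm{w},\lambda}}\mathbb{E}^G[(\bm{w}^\top\bm{X}-t)_+^2]$. For $a\in\mathbb{R}$, $s>0$ define $h_{\lambda,t}(a,s)=\sup_{F\in\mathcal{L}_\lambda(a,s)}\mathbb{E}^F[(X-t)_+^2]$ and $h_{S,\lambda,t}(a,s)=\sup_{F\in\mathcal{L}_{S,\lambda}(a,s)}\mathbb{E}^F[(X-t)_+^2]$.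 Then the optimal portfolio for the problem with $\mathcal{M}=\mathcal{M}(\bm{\mu},\bm{\Sigma})$ is \[ \bm{w}^*_\lambda=\arg\min_{\bm{w}\in\mathcal{W}^+} h_{\lambda,t}\big(\bm{w}^\top\bm{\mu},\sqrt{\bm{w}^\top\bm{\Sigma}\bm{w}}\big), \] and the optimal portfolio for the problem with $\mathcal{M}=\mathcal{M}_S(\bm{\mu},\bm{\Sigma})$ is \[ \bm{w}^*_{S,\lambda}=\arg\min_{\bm{w}\in\mathcal{W}^+} h_{S,\lambda,t}\big(\bm{w}^\top\bm{\mu},\sqrt{\bm{w}^\top\bm{\Sigma}\bm{w}}\big). \]
   Context: For $x\in\mathbb{R}$, $(x)_+=\max\{x,0\}$ and $(x)_-=\max\{-x,0\}$. For $a\in\mathbb{R}$, $s>0$: $\mathcal{L}_\lambda(a,s)$ is the set of probability distributions $F$ on $\mathbb{R}$ with $\mathbb{E}^F[X]=a$, $\mathbb{E}^F[X^2]=a^2+s^2$ and $\mathbb{E}^F[(X-t)_-]\le\lambda$; $\mathcal{L}_{S,\lambda}(a,s)$ is its subset of symmetric distributions. A distribution of a real random variable $X$ is symmetric if there is $b\in\mathbb{R}$ with $\mathbb{P}(X-b>x)=\mathbb{P}(X-b<-x)$ for all $x$. A distribution $G$ of $\bm{X}\in\mathbb{R}^d$ is symmetric if there is $\bm{a}\in\mathbb{R}^d$ with $\mathbb{P}(\bm{X}-\bm{a}\in B)=\mathbb{P}(\bm{X}-\bm{a}\in -B)$ for all Borel $B\subseteq\mathbb{R}^d$, where $-B=\{\bm{x}:-\bm{x}\in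 B\}$. *)

theory Defs
  imports "HOL-Probability.Probability"
begin

definition real_dist :: "real measure \<Rightarrow> bool" where
  "real_dist F \<longleftrightarrow> prob_space F \<and> sets F = sets borel \<and>
     integrable F (\<lambda>x. x) \<and> integrable F (\<lambda>x. x\<^sup>2)"

definition L_lam :: "real \<Rightarrow> real \<Rightarrow> real \<Rightarrow> real \<Rightarrow> real measure set" where
  "L_lam t lam a s = {F. real_dist F \<and>
      (\<integral>x. x \<partial>F) = a \<and> (\<integral>x. x\<^sup>2 \<partial>F) = a\<^sup>2 + s\<^sup>2 \<and>
      (\<integral>x. max (-(x - t)) 0 \<partial>F) \<le> lam}"

definition symmetric_real :: "real measure \<Rightarrow> bool" where
  "symmetric_real F \<longleftrightarrow> (\<exists>b. \<forall>x. measure F {y \<in> space F. y - b > x} = measure F {y \<in> space F. y - b < - x})"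

definition LS_lam :: "real \<Rightarrow> real \<Rightarrow> real \<Rightarrow> real \<Rightarrow> real measure set" where
  "LS_lam t lam a s = {F \<in> L_lam t lam a s. symmetric_real F}"

definition upper_sq :: "real \<Rightarrow> real measure \<Rightarrow> ennreal" where
  "upper_sq t F = (\<integral>\<^sup>+x. ennreal ((max (x - t) 0)\<^sup>2) \<partial>F)"

definition h_lam :: "real \<Rightarrow> real \<Rightarrow> real \<Rightarrow> real \<Rightarrow> ennreal" where
  "h_lam lam t a s = (SUP F \<in> L_lam t lam a s. upper_sq t F)"

definition hS_lam :: "real \<Rightarrow> real \<Rightarrow> real \<Rightarrow> real \<Rightarrow> ennreal" where
  "hS_lam lam t a s = (SUP F \<in> LS_lam t lam a s. upper_sq t F)"

definition pos_def :: "real^'n^'n \<Rightarrow> bool" where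
  "pos_def S \<longleftrightarrow> transpose S = S \<and> (\<forall>x. x \<noteq> 0 \<longrightarrow> x \<bullet> (S *v x) > 0)"

definition M_set :: "real^'n \<Rightarrow> real^'n^'n \<Rightarrow> (real^'n) measure set" where
  "M_set mu S = {G. prob_space G \<and> sets G = sets borel \<and>
      (\<forall>i. integrable G (\<lambda>x. x $ i)) \<and>
      (\<forall>i j. integrable G (\<lambda>x. x $ i * x $ j)) \<and>
      (\<forall>i. (\<integral>x. x $ i \<partial>G) = mu $ i) \<and>
      (\<forall>i j. (\<integral>x. (x $ i - mu $ i) * (x $ j - mu $ j) \<partial>G) = S $ i $ j)}"

definition symmetric_vec :: "(real^'n) measure \<Rightarrow> bool" where
  "symmetric_vec G \<longleftrightarrow> (\<exists>a. \<forall>B \<in> sets borel.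
      measure G {x \<in> space G. x - a \<in> B} = measure G {x \<in> space G. x - a \<in> {y. - y \<in> B}})"

definition MS_set :: "real^'n \<Rightarrow> real^'n^'n \<Rightarrow> (real^'n) measure set" where
  "MS_set mu S = {G \<in> M_set mu S. symmetric_vec G}"

definition W_plus :: "(real^'n) set" where
  "W_plus = {w. (\<Sum>i\<in>UNIV. w $ i) = 1 \<and> (\<forall>i. w $ i \<ge> 0)}"

definition M_w_lam :: "(real^'n) measure set \<Rightarrow> real \<Rightarrow> real \<Rightarrow> real^'n \<Rightarrow> (real^'n) measure set" where
  "M_w_lam M t lam w = {G \<in> M. (\<integral>x. max (-(w \<bullet> x - t)) 0 \<partial>G) \<le> lam}"

definition worst_obj :: "(real^'n) measure set \<Rightarrow> real \<Rightarrow> real \<Rightarrow> real^'n \<Rightarrow> ennreal" where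
  "worst_obj M t lam w = (SUP G \<in> M_w_lam M t lam w. \<integral>\<^sup>+x. ennreal ((max (w \<bullet> x - t) 0)\<^sup>2) \<partial>G)"

definition is_argmin_on :: "('a \<Rightarrow> 'b::linorder) \<Rightarrow> 'a set \<Rightarrow> 'a \<Rightarrow> bool" where
  "is_argmin_on f A x \<longleftrightarrow> x \<in> A \<and> (\<forall>y\<in>A. f x \<le> f y)"

end

theory Submission
  imports Defs
begin

(* For fixed w the worst-case objective equals h(w'mu, sqrt(w' Sigma w)), so both argmin
  problems have the same objective on W+.  Mapping G to the law of w'X sends M_{w,lambda} onto
  L_lambda(w'mu, s) with s = sqrt(w' Sigma w), and preserves E[(w'X - t)_+^2].  Onto: write
  Sigma = u u' + sum_k c_k c_k' with w'u = s and w'c_k = 0 (split off the rank-one part of Sigma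
  along w, then decompose the positive semidefinite remainder into rank-one terms).  For Y ~ F let
  X = mu + ((Y - a)/s) u + V, where V is independent of Y and uniform on the 2d points
  +-sqrt(d) c_k; then w'X = Y and Cov X = Sigma.  Symmetry is reflection invariance: it passes
  to w'X, and X is symmetric about mu whenever Y is symmetric about its mean a. *)

definition pos_semidef :: "real^'n^'n \<Rightarrow> bool" where
  "pos_semidef R \<longleftrightarrow> transpose R = R \<and> (\<forall>x. 0 \<le> x \<bullet> (R *v x))"

definition outer_prod :: "real^'n \<Rightarrow> real^'n \<Rightarrow> real^'n^'n" where
  "outer_prod u v = (\<chi> i j. u $ i * v $ j)"

lemma outer_prod_mult_vec: "outer_prod u v *v x = (v \<bullet> x) *\<^sub>R u"
  by (simp add: outer_prod_def matrix_vector_mult_def inner_vec_def vec_eq_iff sum_distrib_left mult_ac)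

lemma pos_def_imp_pos_semidef: "pos_def S \<Longrightarrow> pos_semidef S"
  unfolding pos_def_def pos_semidef_def by (metis inner_zero_left order.refl order.strict_implies_order)

lemma inner_mult_vec_commute:
  fixes R :: "real^'n^'n"
  assumes "transpose R = R"
  shows "x \<bullet> (R *v y) = y \<bullet> (R *v x)"
  by (metis assms dot_lmul_matrix inner_commute transpose_matrix_vector)

lemma quadratic_form_add_scaleR:
  fixes R :: "real^'n^'n"
  assumes "transpose R = R"
  shows "(x + a *\<^sub>R z) \<bullet> (R *v (x + a *\<^sub>R z)) = x \<bullet> (R *v x) + 2 * a * (x \<bullet> (R *v z)) + a\<^sup>2 * (z \<bullet> (R *v z))"
proof -
  have "R *v (x + a *\<^sub>R z) = R *v x + a *\<^sub>R (R *v z)"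
    by (simp add: matrix_vector_right_distrib matrix_vector_mult_scaleR)
  then show ?thesis
    using inner_mult_vec_commute[OF assms, of z x]
    by (simp add: inner_add_left inner_add_right power2_eq_square algebra_simps)
qed

lemma sum_matrix_vector_mult:
  fixes A :: "'k \<Rightarrow> real^'n^'m"
  shows "(\<Sum>k\<in>I. A k) *v x = (\<Sum>k\<in>I. A k *v x)"
  by (induction I rule: infinite_finite_induct) (simp_all add: matrix_vector_mult_add_rdistrib)

lemma pos_semidef_quadratic_form_eq_0:
  fixes R :: "real^'n^'n"
  assumes R: "pos_semidef R" and v: "v \<bullet> (R *v v) = 0"
  shows "R *v v = 0"
proof -
  have sym: "transpose R = R" using R unfolding pos_semidef_def by blast
  have orth: "x \<bullet> (R *v v) = 0" for x
  proof (rule ccontr)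
    assume ne: "x \<bullet> (R *v v) \<noteq> 0"
    define a where "a = - (x \<bullet> (R *v x) + 1) / (2 * (x \<bullet> (R *v v)))"
    have "0 \<le> (x + a *\<^sub>R v) \<bullet> (R *v (x + a *\<^sub>R v))"
      using R unfolding pos_semidef_def by blast
    also have "\<dots> = x \<bullet> (R *v x) + 2 * a * (x \<bullet> (R *v v))"
      by (simp add: quadratic_form_add_scaleR[OF sym] v)
    also have "\<dots> = -1"
      using ne unfolding a_def by (simp add: field_simps)
    finally show False by simp
  qed
  show ?thesis using orth[of "R *v v"] by simp
qed

lemma pos_semidef_cauchy_schwarz:
  fixes R :: "real^'n^'n"
  assumes R: "pos_semidef R"
  shows "(x \<bullet> (R *v v))\<^sup>2 \<le> (x \<bullet> (R *v x)) * (v \<bullet> (R *v v))"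
proof -
  have sym: "transpose R = R" and nonneg: "\<And>y. 0 \<le> y \<bullet> (R *v y)"
    using R unfolding pos_semidef_def by blast+
  consider "v \<bullet> (R *v v) = 0" | "v \<bullet> (R *v v) > 0" using nonneg[of v] by linarith
  then show ?thesis
  proof cases
    case 1
    then show ?thesis using pos_semidef_quadratic_form_eq_0[OF R 1] by simp
  next
    case 2
    define a where "a = - (x \<bullet> (R *v v)) / (v \<bullet> (R *v v))"
    have "0 \<le> (x + a *\<^sub>R v) \<bullet> (R *v (x + a *\<^sub>R v))" by (rule nonneg)
    also have "\<dots> = x \<bullet> (R *v x) + 2 * a * (x \<bullet> (R *v v)) + a\<^sup>2 * (v \<bullet> (R *v v))"
      by (rule quadratic_form_add_scaleR[OF sym])
    also have "\<dots> = x \<bullet> (R *v x) - (x \<bullet> (R *v v))\<^sup>2 / (v \<bullet> (R *v v))"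
      using 2 unfolding a_def by (simp add: field_simps power2_eq_square)
    finally show ?thesis using 2 by (simp add: field_simps)
  qed
qed

(* Also covers v \<bullet> (R *v v) = 0: then R *v v = 0 and, as 1 / 0 = 0, u = 0. *)
lemma pos_semidef_deflate:
  fixes R :: "real^'n^'n" and v :: "real^'n"
  defines "u \<equiv> (1 / sqrt (v \<bullet> (R *v v))) *\<^sub>R (R *v v)"
  assumes R: "pos_semidef R"
  shows "pos_semidef (R - outer_prod u u)"
    and "(R - outer_prod u u) *v v = 0"
    and "v \<bullet> u = sqrt (v \<bullet> (R *v v))"
proof -
  define q where "q = v \<bullet> (R *v v)"
  have "q \<ge> 0" using R unfolding pos_semidef_def q_def by blast
  then have sq: "sqrt q * sqrt q = q" by simp
  have xu: "x \<bullet> u = (x \<bullet> (R *v v)) / sqrt q" for x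
    unfolding u_def q_def by simp
  have Rv: "R *v v = 0" if "q = 0"
    using pos_semidef_quadratic_form_eq_0[OF R] that unfolding q_def by blast
  have scaled_u: "sqrt q *\<^sub>R u = R *v v"
    using Rv by (cases "q = 0") (simp_all add: u_def q_def[symmetric])
  have uv: "u \<bullet> v = sqrt q"
    using sq Rv unfolding inner_commute[of u] xu q_def[symmetric]
    by (cases "q = 0") (simp_all add: field_simps q_def)
  then show "v \<bullet> u = sqrt (v \<bullet> (R *v v))" by (simp add: inner_commute q_def)
  show "(R - outer_prod u u) *v v = 0"
    by (simp add: matrix_vector_mult_diff_rdistrib outer_prod_mult_vec uv scaled_u)
  have "x \<bullet> ((R - outer_prod u u) *v x) = x \<bullet> (R *v x) - (x \<bullet> (R *v v))\<^sup>2 / q" for x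
    using sq by (simp add: matrix_vector_mult_diff_rdistrib outer_prod_mult_vec inner_diff_right
        xu inner_commute[of u x] power2_eq_square)
  moreover have "(x \<bullet> (R *v v))\<^sup>2 / q \<le> x \<bullet> (R *v x)" for x
    using pos_semidef_cauchy_schwarz[OF R, of x v] \<open>q \<ge> 0\<close> R
    unfolding q_def[symmetric] pos_semidef_def
    by (cases "q = 0") (simp_all add: divide_le_eq mult.commute)
  moreover have "transpose (R - outer_prod u u) = R - outer_prod u u"
    using R by (simp add: pos_semidef_def outer_prod_def transpose_def vec_eq_iff)
  ultimately show "pos_semidef (R - outer_prod u u)"
    unfolding pos_semidef_def by (metis diff_ge_0_iff_ge)
qed

lemma pos_semidef_sum_outer_prod_on:
  fixes R :: "real^'n^'n"
  assumes "finite I" "pos_semidef R" "\<And>i. i \<notin> I \<Longrightarrow> R *v axis i 1 = 0"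
  shows "\<exists>c. R = (\<Sum>k\<in>I. outer_prod (c k) (c k))"
  using assms
proof (induction I arbitrary: R rule: finite_induct)
  case empty
  have "R $ j $ i = (R *v axis i 1) $ j" for i j
    by (simp add: matrix_vector_mult_basis column_def)
  then have "R = 0" using empty.prems(2) by (simp add: vec_eq_iff)
  then show ?case by simp
next
  case (insert m I)
  define e where "e = axis m (1::real)"
  define u where "u = (1 / sqrt (e \<bullet> (R *v e))) *\<^sub>R (R *v e)"
  have sym: "transpose R = R" using insert.prems(1) unfolding pos_semidef_def by blast
  have psd: "pos_semidef (R - outer_prod u u)" and Re: "(R - outer_prod u u) *v e = 0"
    using pos_semidef_deflate[OF insert.prems(1), of e] unfolding u_def by blast+
  have "(R - outer_prod u u) *v axis i 1 = 0" if i: "i \<notin> I" for i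
  proof (cases "i = m")
    case True
    then show ?thesis using Re unfolding e_def by simp
  next
    case False
    then have Ri: "R *v axis i 1 = 0" using i insert.prems(2) by blast
    have "u $ i = 0"
      using inner_mult_vec_commute[OF sym, of "axis i 1" e]
      by (simp add: u_def cart_eq_inner_axis[of "R *v e"] inner_commute Ri)
    then show ?thesis
      by (simp add: matrix_vector_mult_diff_rdistrib outer_prod_mult_vec Ri inner_commute[of u]
          cart_eq_inner_axis[symmetric])
  qed
  then obtain c where c: "R - outer_prod u u = (\<Sum>k\<in>I. outer_prod (c k) (c k))"
    using insert.IH[OF psd] by blast
  have "R = outer_prod u u + (\<Sum>k\<in>I. outer_prod ((c(m := u)) k) ((c(m := u)) k))"
    using c insert.hyps(2) by (auto simp: algebra_simps intro!: sum.cong)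
  then show ?case using insert.hyps by (intro exI[of _ "c(m := u)"]) simp
qed

lemma pos_semidef_sum_outer_prod:
  fixes R :: "real^'n^'n"
  assumes "pos_semidef R"
  shows "\<exists>c::'n \<Rightarrow> real^'n. R = (\<Sum>k\<in>UNIV. outer_prod (c k) (c k))"
  using pos_semidef_sum_outer_prod_on[of UNIV R] assms by simp

lemma pos_semidef_decomp_along:
  fixes S :: "real^'n^'n" and w :: "real^'n"
  assumes "pos_semidef S"
  shows "\<exists>u c. w \<bullet> u = sqrt (w \<bullet> (S *v w)) \<and> (\<forall>k::'n. w \<bullet> c k = 0) \<and>
           S = outer_prod u u + (\<Sum>k\<in>UNIV. outer_prod (c k) (c k))"
proof -
  define u where "u = (1 / sqrt (w \<bullet> (S *v w))) *\<^sub>R (S *v w)"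
  have psd: "pos_semidef (S - outer_prod u u)" and Rw: "(S - outer_prod u u) *v w = 0"
    and wu: "w \<bullet> u = sqrt (w \<bullet> (S *v w))"
    using pos_semidef_deflate[OF assms, of w] unfolding u_def by blast+
  obtain c :: "'n \<Rightarrow> real^'n" where c: "S - outer_prod u u = (\<Sum>k\<in>UNIV. outer_prod (c k) (c k))"
    using pos_semidef_sum_outer_prod[OF psd] by blast
  have "(\<Sum>k\<in>UNIV. (w \<bullet> c k)\<^sup>2) = w \<bullet> ((S - outer_prod u u) *v w)"
    unfolding c sum_matrix_vector_mult
    by (simp add: outer_prod_mult_vec inner_sum_right inner_commute[of _ w] power2_eq_square)
  also have "\<dots> = 0" using Rw by simp
  finally have "\<forall>k. w \<bullet> c k = 0" by (simp add: sum_nonneg_eq_0_iff)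
  moreover have "S = outer_prod u u + (\<Sum>k\<in>UNIV. outer_prod (c k) (c k))"
    using c by (simp add: algebra_simps)
  ultimately show ?thesis using wu by blast
qed

lemma translate_borel:
  fixes A :: "'a::real_normed_vector set"
  assumes "A \<in> sets borel"
  shows "{y. a + y \<in> A} \<in> sets borel"
  using measurable_sets[OF borel_measurable_continuous_onI assms, of "\<lambda>y. a + y"]
  by (simp add: continuous_intros vimage_def)

lemma measure_distr_reflection:
  fixes G :: "(real^'n) measure"
  assumes "sets G = sets borel" "A \<in> sets borel"
  shows "measure (distr G borel (\<lambda>x. 2 *\<^sub>R a - x)) A
      = measure G {x \<in> space G. x - a \<in> {y. - y \<in> {y. a + y \<in> A}}}"
proof -
  have "a + - (x - a) = 2 *\<^sub>R a - x" for x by (simp add: scaleR_2)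
  then show ?thesis
    using assms sets_eq_imp_space_eq[OF assms(1)]
    by (simp add: measure_distr measurable_cong_sets[OF assms(1) refl] vimage_def)
qed

lemma symmetric_vec_imp_reflection_invariant:
  fixes G :: "(real^'n) measure"
  assumes G: "prob_space G" "sets G = sets borel" and sym: "symmetric_vec G"
  shows "\<exists>a. distr G borel (\<lambda>x. 2 *\<^sub>R a - x) = G"
proof -
  interpret prob_space G by (rule G(1))
  obtain a where ha: "\<forall>B \<in> sets borel. measure G {x \<in> space G. x - a \<in> B}
      = measure G {x \<in> space G. x - a \<in> {y. - y \<in> B}}"
    using sym unfolding symmetric_vec_def by blast
  interpret D: prob_space "distr G borel (\<lambda>x. 2 *\<^sub>R a - x)"
    by (rule prob_space_distr) (simp add: measurable_cong_sets[OF G(2) refl])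
  have "distr G borel (\<lambda>x. 2 *\<^sub>R a - x) = G"
  proof (rule measure_eqI)
    fix A assume "A \<in> sets (distr G borel (\<lambda>x. 2 *\<^sub>R a - x))"
    then have A: "A \<in> sets borel" by simp
    have "measure (distr G borel (\<lambda>x. 2 *\<^sub>R a - x)) A
        = measure G {x \<in> space G. x - a \<in> {y. - y \<in> {y. a + y \<in> A}}}"
      by (rule measure_distr_reflection[OF G(2) A])
    also have "\<dots> = measure G {x \<in> space G. x - a \<in> {y. a + y \<in> A}}"
      by (rule ha[rule_format, OF translate_borel[OF A], symmetric])
    also have "{x \<in> space G. x - a \<in> {y. a + y \<in> A}} = A"
      using sets_eq_imp_space_eq[OF G(2)] by auto
    finally show "emeasure (distr G borel (\<lambda>x. 2 *\<^sub>R a - x)) A = emeasure G A"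
      by (simp add: D.emeasure_eq_measure emeasure_eq_measure)
  qed (simp add: G(2))
  then show ?thesis by blast
qed

lemma reflection_invariant_imp_symmetric_vec:
  fixes G :: "(real^'n) measure"
  assumes G: "sets G = sets borel" and inv: "distr G borel (\<lambda>x. 2 *\<^sub>R a - x) = G"
  shows "symmetric_vec G"
proof -
  have space: "space G = UNIV" using sets_eq_imp_space_eq[OF G] by simp
  have "measure G {x \<in> space G. x - a \<in> B} = measure G {x \<in> space G. x - a \<in> {y. - y \<in> B}}"
    if B: "B \<in> sets borel" for B
  proof -
    have "{y. a + y \<in> {x \<in> space G. x - a \<in> B}} = B" by (auto simp: space)
    moreover have "{x \<in> space G. x - a \<in> B} \<in> sets borel"
      using translate_borel[OF B, of "- a"] by (simp add: space algebra_simps)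
    ultimately show ?thesis
      using measure_distr_reflection[OF G, of "{x \<in> space G. x - a \<in> B}" a] inv by simp
  qed
  then show ?thesis unfolding symmetric_vec_def by blast
qed

lemma symmetric_real_imp_reflection_invariant:
  fixes F :: "real measure"
  assumes F: "prob_space F" "sets F = sets borel" and sym: "symmetric_real F"
  shows "\<exists>b. distr F borel (\<lambda>y. 2 * b - y) = F"
proof -
  interpret real_distribution F
    using F by (intro real_distribution.intro real_distribution_axioms.intro) auto
  have space: "space F = UNIV" using sets_eq_imp_space_eq[OF F(2)] by simp
  obtain b where
    hb0: "\<forall>x. measure F {y \<in> space F. y - b > x} = measure F {y \<in> space F. y - b < - x}"
    using sym unfolding symmetric_real_def by blast
  have hb: "measure F {b + x<..} = measure F {..< b - x}" for x
  proof -
    have "{y \<in> space F. y - b > x} = {b + x<..}" "{y \<in> space F. y - b < - x} = {..< b - x}"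
      by (auto simp: space)
    then show ?thesis using hb0 by metis
  qed
  have refl_meas: "(\<lambda>y. 2 * b - y) \<in> borel_measurable F"
    by (simp add: measurable_cong_sets[OF F(2) refl])
  interpret D: real_distribution "distr F borel (\<lambda>y. 2 * b - y)"
    by (intro real_distribution.intro real_distribution_axioms.intro prob_space_distr refl_meas) simp
  have "cdf (distr F borel (\<lambda>y. 2 * b - y)) x = cdf F x" for x
  proof -
    have "(\<lambda>y. 2 * b - y) -` {..x} \<inter> space F = space F - {..< 2 * b - x}" by (auto simp: space)
    then have "cdf (distr F borel (\<lambda>y. 2 * b - y)) x = measure F (space F - {..< 2 * b - x})"
      unfolding cdf_def2 measure_distr[OF refl_meas atMost_borel] by simp
    also have "\<dots> = 1 - measure F {..< 2 * b - x}" by (rule prob_compl) simp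
    also have "measure F {..< 2 * b - x} = measure F {x <..}" using hb[of "x - b"] by simp
    also have "1 - measure F {x <..} = measure F (space F - {x <..})"
      by (rule prob_compl[symmetric]) simp
    also have "space F - {x <..} = {..x}" by (auto simp: space)
    finally show ?thesis by (simp add: cdf_def2)
  qed
  then have "distr F borel (\<lambda>y. 2 * b - y) = F"
    by (intro cdf_unique D.real_distribution_axioms real_distribution_axioms) auto
  then show ?thesis by blast
qed

lemma reflection_invariant_imp_symmetric_real:
  fixes F :: "real measure"
  assumes F: "sets F = sets borel" and inv: "distr F borel (\<lambda>y. 2 * b - y) = F"
  shows "symmetric_real F"
proof -
  have space: "space F = UNIV" using sets_eq_imp_space_eq[OF F] by simp
  have "measure F {y \<in> space F. y - b > x} = measure F {y \<in> space F. y - b < - x}" for x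
  proof -
    have A: "{y. y - b < - x} \<in> sets borel" by measurable
    have "measure F {y. y - b < - x} = measure F ((\<lambda>y. 2 * b - y) -` {y. y - b < - x})"
      using measure_distr[OF _ A, of "\<lambda>y. 2 * b - y" F] inv
      by (simp add: space measurable_cong_sets[OF F refl])
    also have "(\<lambda>y. 2 * b - y) -` {y. y - b < - x} = {y. y - b > x}" by auto
    finally show ?thesis by (simp add: space)
  qed
  then show ?thesis unfolding symmetric_real_def by blast
qed

lemma reflection_center_eq_mean:
  fixes F :: "real measure"
  assumes F: "real_dist F" and inv: "distr F borel (\<lambda>y. 2 * b - y) = F"
  shows "b = (\<integral>y. y \<partial>F)"
proof -
  interpret prob_space F using F unfolding real_dist_def by blast
  have sets: "sets F = sets borel" and int: "integrable F (\<lambda>y. y)"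
    using F unfolding real_dist_def by blast+
  have "(\<integral>y. y \<partial>F) = (\<integral>y. y \<partial>distr F borel (\<lambda>y. 2 * b - y))" by (simp only: inv)
  also have "\<dots> = (\<integral>y. 2 * b - y \<partial>F)" by (rule integral_distr) (simp_all add: measurable_cong_sets[OF sets refl])
  also have "\<dots> = 2 * b - (\<integral>y. y \<partial>F)"
    using int by (simp add: prob_space)
  finally show ?thesis by simp
qed

lemma inner_measurable: "(\<lambda>x. w \<bullet> x) \<in> borel_measurable G" if "sets G = sets borel"
  for G :: "(real^'n) measure"
  by (simp add: measurable_cong_sets[OF that refl])

lemma M_set_second_moment:
  assumes G: "G \<in> M_set mu S"
  shows "(\<integral>x. x $ i * x $ j \<partial>G) = S $ i $ j + mu $ i * mu $ j"
proof -
  have "prob_space G" and i1: "\<And>i. integrable G (\<lambda>x. x $ i)"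
    and i2: "integrable G (\<lambda>x. x $ i * x $ j)" and m1: "\<And>i. (\<integral>x. x $ i \<partial>G) = mu $ i"
    and cv: "(\<integral>x. (x $ i - mu $ i) * (x $ j - mu $ j) \<partial>G) = S $ i $ j"
    using G unfolding M_set_def by auto
  then interpret prob_space G by simp
  have "(\<integral>x. (x $ i - mu $ i) * (x $ j - mu $ j) \<partial>G)
      = (\<integral>x. x $ i * x $ j - mu $ j * x $ i - mu $ i * x $ j + mu $ i * mu $ j \<partial>G)"
    by (rule Bochner_Integration.integral_cong) (auto simp: algebra_simps)
  also have "\<dots> = (\<integral>x. x $ i * x $ j \<partial>G) - mu $ j * mu $ i - mu $ i * mu $ j + mu $ i * mu $ j"
    using i1 i2 m1 by (simp add: prob_space)
  finally show ?thesis using cv by (simp add: algebra_simps)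
qed

lemma M_set_inner_moments:
  fixes G :: "(real^'n) measure" and mu w :: "real^'n" and S :: "real^'n^'n"
  assumes G: "G \<in> M_set mu S"
  shows "integrable G (\<lambda>x. w \<bullet> x)" and "integrable G (\<lambda>x. (w \<bullet> x)\<^sup>2)"
    and "(\<integral>x. w \<bullet> x \<partial>G) = w \<bullet> mu"
    and "(\<integral>x. (w \<bullet> x)\<^sup>2 \<partial>G) = (w \<bullet> mu)\<^sup>2 + w \<bullet> (S *v w)"
proof -
  have i1: "\<And>i. integrable G (\<lambda>x. x $ i)" and i2: "\<And>i j. integrable G (\<lambda>x. x $ i * x $ j)"
    and m1: "\<And>i. (\<integral>x. x $ i \<partial>G) = mu $ i"
    using G unfolding M_set_def by auto
  have inner: "w \<bullet> x = (\<Sum>i\<in>UNIV. w $ i * x $ i)" for x :: "real^'n"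
    by (simp add: inner_vec_def)
  have inner_sq: "(w \<bullet> x)\<^sup>2 = (\<Sum>i\<in>UNIV. \<Sum>j\<in>UNIV. (w $ i * w $ j) * (x $ i * x $ j))" for x :: "real^'n"
    unfolding inner by (simp add: power2_eq_square sum_product algebra_simps)
  show "integrable G (\<lambda>x. w \<bullet> x)" unfolding inner using i1 by auto
  show "integrable G (\<lambda>x. (w \<bullet> x)\<^sup>2)" unfolding inner_sq using i2 by auto
  show "(\<integral>x. w \<bullet> x \<partial>G) = w \<bullet> mu" unfolding inner using i1 m1 by (simp add: integral_sum)
  have "(\<integral>x. (w \<bullet> x)\<^sup>2 \<partial>G) = (\<Sum>i\<in>UNIV. \<Sum>j\<in>UNIV. (w $ i * w $ j) * (S $ i $ j + mu $ i * mu $ j))"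
    unfolding inner_sq using i2 M_set_second_moment[OF G] by (simp add: integral_sum)
  also have "\<dots> = w \<bullet> (S *v w) + (w \<bullet> mu)\<^sup>2"
    by (simp add: inner sum.distrib algebra_simps power2_eq_square sum_product
        matrix_vector_mult_def sum_distrib_left)
  finally show "(\<integral>x. (w \<bullet> x)\<^sup>2 \<partial>G) = (w \<bullet> mu)\<^sup>2 + w \<bullet> (S *v w)" by simp
qed

lemma distr_inner_M_set:
  fixes G :: "(real^'n) measure" and mu w :: "real^'n" and S :: "real^'n^'n"
  assumes G: "G \<in> M_set mu S"
  shows "real_dist (distr G borel (\<lambda>x. w \<bullet> x))"
    and "(\<integral>y. y \<partial>distr G borel (\<lambda>x. w \<bullet> x)) = w \<bullet> mu"
    and "(\<integral>y. y\<^sup>2 \<partial>distr G borel (\<lambda>x. w \<bullet> x)) = (w \<bullet> mu)\<^sup>2 + w \<bullet> (S *v w)"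
proof -
  have "prob_space G" and "sets G = sets borel" using G unfolding M_set_def by auto
  note wm = inner_measurable[OF this(2), of w]
  have idm: "(\<lambda>y::real. y) \<in> borel_measurable borel" and sqm: "(\<lambda>y::real. y\<^sup>2) \<in> borel_measurable borel"
    by simp_all
  note moments = M_set_inner_moments[OF G, of w]
  show "real_dist (distr G borel (\<lambda>x. w \<bullet> x))"
    unfolding real_dist_def using \<open>prob_space G\<close> moments(1,2)
    by (auto intro!: prob_space.prob_space_distr wm
        simp: integrable_distr_eq[OF wm idm] integrable_distr_eq[OF wm sqm])
  show "(\<integral>y. y \<partial>distr G borel (\<lambda>x. w \<bullet> x)) = w \<bullet> mu"
    unfolding integral_distr[OF wm idm] by (rule moments(3))
  show "(\<integral>y. y\<^sup>2 \<partial>distr G borel (\<lambda>x. w \<bullet> x)) = (w \<bullet> mu)\<^sup>2 + w \<bullet> (S *v w)"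
    unfolding integral_distr[OF wm sqm] by (rule moments(4))
qed

lemma symmetric_real_distr_inner:
  fixes G :: "(real^'n) measure"
  assumes G: "prob_space G" "sets G = sets borel" and sym: "symmetric_vec G"
  shows "symmetric_real (distr G borel (\<lambda>x. w \<bullet> x))"
proof -
  obtain a where G_reflect: "distr G borel (\<lambda>x. 2 *\<^sub>R a - x) = G"
    using symmetric_vec_imp_reflection_invariant[OF G sym] by blast
  note wm = inner_measurable[OF G(2), of w]
  have "distr (distr G borel (\<lambda>x. w \<bullet> x)) borel (\<lambda>y. 2 * (w \<bullet> a) - y)
      = distr G borel (\<lambda>x. w \<bullet> (2 *\<^sub>R a - x))"
    by (subst distr_distr) (simp_all add: wm comp_def inner_diff_right)
  also have "\<dots> = distr (distr G borel (\<lambda>x. 2 *\<^sub>R a - x)) borel (\<lambda>x. w \<bullet> x)"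
    by (subst distr_distr) (simp_all add: measurable_cong_sets[OF G(2) refl] comp_def)
  also have "\<dots> = distr G borel (\<lambda>x. w \<bullet> x)" unfolding G_reflect ..
  finally show ?thesis by (rule reflection_invariant_imp_symmetric_real[rotated]) simp
qed

lemma distr_pair_measure_snd:
  assumes "prob_space M" "sigma_finite_measure N"
  shows "distr (M \<Otimes>\<^sub>M N) N snd = N"
proof (rule measure_eqI)
  interpret M: prob_space M by fact
  interpret N: sigma_finite_measure N by fact
  fix A assume "A \<in> sets (distr (M \<Otimes>\<^sub>M N) N snd)"
  then have A: "A \<in> sets N" by simp
  have "snd -` A \<inter> space (M \<Otimes>\<^sub>M N) = space M \<times> A"
    using sets.sets_into_space[OF A] by (auto simp: space_pair_measure)
  then show "emeasure (distr (M \<Otimes>\<^sub>M N) N snd) A = emeasure N A"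
    using A by (simp add: emeasure_distr N.emeasure_pair_measure_Times M.emeasure_space_1)
qed simp

lemma integral_measure_pmf_pair_measure:
  fixes p :: "'k pmf" and F :: "real measure" and f :: "'k \<times> real \<Rightarrow> real"
  assumes fin: "finite (set_pmf p)" and F: "prob_space F"
    and meas: "f \<in> borel_measurable (measure_pmf p \<Otimes>\<^sub>M F)"
    and int: "\<And>k. integrable F (\<lambda>y. f (k, y))"
  shows "integrable (measure_pmf p \<Otimes>\<^sub>M F) f"
    and "integral\<^sup>L (measure_pmf p \<Otimes>\<^sub>M F) f = (\<Sum>k\<in>set_pmf p. pmf p k * (\<integral>y. f (k, y) \<partial>F))"
proof -
  interpret F: prob_space F by fact
  interpret P: pair_prob_space "measure_pmf p" F by unfold_locales
  show i: "integrable (measure_pmf p \<Otimes>\<^sub>M F) f"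
    by (rule P.Fubini_integrable[OF meas]) (auto intro: integrable_measure_pmf_finite[OF fin] int)
  have "integral\<^sup>L (measure_pmf p \<Otimes>\<^sub>M F) f = (\<integral>k. (\<integral>y. f (k, y) \<partial>F) \<partial>measure_pmf p)"
    using P.integral_fst'[OF i] by simp
  also have "\<dots> = (\<Sum>k\<in>set_pmf p. (\<integral>y. f (k, y) \<partial>F) * pmf p k)"
    by (rule integral_measure_pmf_real[OF fin]) auto
  finally show "integral\<^sup>L (measure_pmf p \<Otimes>\<^sub>M F) f = (\<Sum>k\<in>set_pmf p. pmf p k * (\<integral>y. f (k, y) \<partial>F))"
    by (simp add: mult.commute)
qed

lemma integral_standardized_quadratic:
  fixes F :: "real measure"
  assumes F: "real_dist F" "(\<integral>x. x \<partial>F) = a" "(\<integral>x. x\<^sup>2 \<partial>F) = a\<^sup>2 + s\<^sup>2" "s > 0"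
  shows "integrable F (\<lambda>y. \<alpha> + \<beta> * ((y - a) / s) + \<gamma> * ((y - a) / s)\<^sup>2)"
    and "(\<integral>y. \<alpha> + \<beta> * ((y - a) / s) + \<gamma> * ((y - a) / s)\<^sup>2 \<partial>F) = \<alpha> + \<gamma>"
proof -
  interpret prob_space F using F(1) real_dist_def by blast
  have i1: "integrable F (\<lambda>x. x)" and i2: "integrable F (\<lambda>x. x\<^sup>2)" using F(1) real_dist_def by auto
  define A where "A = \<alpha> - \<beta> * a / s + \<gamma> * a\<^sup>2 / s\<^sup>2"
  define B where "B = \<beta> / s - 2 * \<gamma> * a / s\<^sup>2"
  define C where "C = \<gamma> / s\<^sup>2"
  have eq: "(\<lambda>y. \<alpha> + \<beta> * ((y - a) / s) + \<gamma> * ((y - a) / s)\<^sup>2) = (\<lambda>y. A + B * y + C * y\<^sup>2)"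
    using F(4) unfolding A_def B_def C_def by (auto simp: field_simps power2_eq_square)
  show "integrable F (\<lambda>y. \<alpha> + \<beta> * ((y - a) / s) + \<gamma> * ((y - a) / s)\<^sup>2)"
    unfolding eq using i1 i2 by auto
  have "(\<integral>y. A + B * y + C * y\<^sup>2 \<partial>F) = A + B * a + C * (a\<^sup>2 + s\<^sup>2)"
    using i1 i2 F(2,3) by (simp add: prob_space)
  also have "\<dots> = \<alpha> + \<gamma>"
    using F(4) unfolding A_def B_def C_def by (simp add: field_simps power2_eq_square)
  finally show "(\<integral>y. \<alpha> + \<beta> * ((y - a) / s) + \<gamma> * ((y - a) / s)\<^sup>2 \<partial>F) = \<alpha> + \<gamma>"
    unfolding eq .
qed

lemma sum_UNIV_times_bool: "(\<Sum>kb\<in>UNIV. f kb) = (\<Sum>k\<in>UNIV. f (k, True) + f (k, False))"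
  for f :: "'a::finite \<times> bool \<Rightarrow> real"
proof -
  have "(\<Sum>kb\<in>UNIV. f kb) = (\<Sum>kb\<in>(UNIV::'a set) \<times> (UNIV::bool set). f kb)"
    by (simp add: UNIV_Times_UNIV)
  also have "\<dots> = (\<Sum>k\<in>UNIV. \<Sum>b\<in>UNIV. f (k, b))"
    by (simp add: sum.cartesian_product)
  finally show ?thesis by (simp add: UNIV_bool add.commute)
qed

(* G is the law of X = mu + Z(Y) u + V from the proof idea, (V, Y) having law P \<Otimes> F. *)
locale lift_along =
  fixes F :: "real measure" and a s :: real and mu u :: "real^'n" and c :: "'n \<Rightarrow> real^'n"
  assumes F: "real_dist F" and mean: "(\<integral>y. y \<partial>F) = a"
    and second_moment: "(\<integral>y. y\<^sup>2 \<partial>F) = a\<^sup>2 + s\<^sup>2" and s_pos: "s > 0"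
begin

definition signs :: "('n \<times> bool) pmf" where
  "signs = pmf_of_set UNIV"

abbreviation P :: "('n \<times> bool) measure" where
  "P \<equiv> measure_pmf signs"

definition V :: "'n \<times> bool \<Rightarrow> real^'n" where
  "V kb = ((if snd kb then 1 else -1) * sqrt (real CARD('n))) *\<^sub>R c (fst kb)"

definition Z :: "real \<Rightarrow> real" where
  "Z y = (y - a) / s"

definition Phi :: "('n \<times> bool) \<times> real \<Rightarrow> real^'n" where
  "Phi z = mu + Z (snd z) *\<^sub>R u + V (fst z)"

definition G :: "(real^'n) measure" where
  "G = distr (P \<Otimes>\<^sub>M F) borel Phi"

definition reflect :: "('n \<times> bool) \<times> real \<Rightarrow> ('n \<times> bool) \<times> real" where
  "reflect z = ((fst (fst z), \<not> snd (fst z)), 2 * a - snd z)"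

lemma prob_space_F: "prob_space F" and sets_F: "sets F = sets borel"
  using F unfolding real_dist_def by blast+

lemma prob_space_P_F: "prob_space (P \<Otimes>\<^sub>M F)"
proof -
  interpret F: prob_space F by (rule prob_space_F)
  interpret pair_prob_space P F by unfold_locales
  show ?thesis by (rule prob_space_axioms)
qed

lemma sets_P_F: "sets (P \<Otimes>\<^sub>M F) = sets (count_space UNIV \<Otimes>\<^sub>M borel)"
  by (intro sets_pair_measure_cong) (simp_all add: sets_F)

lemma measurable_fst_P_F: "(\<lambda>z. g (fst z)) \<in> borel_measurable (P \<Otimes>\<^sub>M F)"
  for g :: "'n \<times> bool \<Rightarrow> 'b::topological_space"
  by (rule measurable_compose[OF measurable_fst]) (simp add: measurable_pmf_measure1)

lemma measurable_snd_P_F: "(\<lambda>z. g (snd z)) \<in> borel_measurable (P \<Otimes>\<^sub>M F)"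
  if "g \<in> borel_measurable borel" for g :: "real \<Rightarrow> 'b::topological_space"
  using that by (intro measurable_compose[OF measurable_snd]) (simp add: measurable_cong_sets[OF sets_F refl])

lemma Z_measurable: "Z \<in> borel_measurable borel"
  unfolding Z_def by simp

lemma Phi_measurable: "Phi \<in> borel_measurable (P \<Otimes>\<^sub>M F)"
  unfolding Phi_def
  by (intro borel_measurable_add borel_measurable_scaleR measurable_fst_P_F
      measurable_snd_P_F[OF Z_measurable] measurable_const)

lemma inner_Phi:
  assumes "w \<bullet> u = s" "\<forall>k. w \<bullet> c k = 0" "w \<bullet> mu = a"
  shows "w \<bullet> Phi z = snd z"
  using assms s_pos unfolding Phi_def V_def Z_def by (simp add: inner_add_right)

lemma integral_quadratic_in_Z:
  fixes \<alpha> \<beta> \<gamma> :: "'n \<times> bool \<Rightarrow> real"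
  defines "h \<equiv> \<lambda>z. \<alpha> (fst z) + \<beta> (fst z) * Z (snd z) + \<gamma> (fst z) * (Z (snd z))\<^sup>2"
  shows "integrable (P \<Otimes>\<^sub>M F) h"
    and "integral\<^sup>L (P \<Otimes>\<^sub>M F) h = (\<Sum>kb\<in>UNIV. \<alpha> kb + \<gamma> kb) / (2 * real CARD('n))"
proof -
  have fin: "finite (set_pmf signs)" and set: "set_pmf signs = UNIV"
    and pmf: "pmf signs kb = 1 / (2 * real CARD('n))" for kb
    unfolding signs_def by (simp_all add: card_UNIV_bool)
  have meas: "h \<in> borel_measurable (P \<Otimes>\<^sub>M F)"
    unfolding h_def
    by (intro borel_measurable_add borel_measurable_times borel_measurable_power
        measurable_fst_P_F measurable_snd_P_F[OF Z_measurable])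
  have int: "integrable F (\<lambda>y. h (kb, y))" for kb
    unfolding h_def Z_def using integral_standardized_quadratic(1)[OF F mean second_moment s_pos] by simp
  show "integrable (P \<Otimes>\<^sub>M F) h"
    by (rule integral_measure_pmf_pair_measure(1)[OF fin prob_space_F meas int])
  have "integral\<^sup>L (P \<Otimes>\<^sub>M F) h = (\<Sum>kb\<in>set_pmf signs. pmf signs kb * (\<integral>y. h (kb, y) \<partial>F))"
    by (rule integral_measure_pmf_pair_measure(2)[OF fin prob_space_F meas int])
  also have "\<dots> = (\<Sum>kb\<in>UNIV. (\<alpha> kb + \<gamma> kb) / (2 * real CARD('n)))"
  proof -
    have "(\<integral>y. h (kb, y) \<partial>F) = \<alpha> kb + \<gamma> kb" for kb
      unfolding h_def Z_def using integral_standardized_quadratic(2)[OF F mean second_moment s_pos] by simp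
    then show ?thesis unfolding set pmf by simp
  qed
  finally show "integral\<^sup>L (P \<Otimes>\<^sub>M F) h = (\<Sum>kb\<in>UNIV. \<alpha> kb + \<gamma> kb) / (2 * real CARD('n))"
    by (simp add: sum_divide_distrib)
qed

lemma prob_space_G: "prob_space G"
  unfolding G_def by (rule prob_space.prob_space_distr[OF prob_space_P_F Phi_measurable])

lemma
  fixes f :: "real^'n \<Rightarrow> real"
  assumes "f \<in> borel_measurable borel"
  shows integrable_G_iff: "integrable G f \<longleftrightarrow> integrable (P \<Otimes>\<^sub>M F) (\<lambda>z. f (Phi z))"
    and integral_G: "integral\<^sup>L G f = integral\<^sup>L (P \<Otimes>\<^sub>M F) (\<lambda>z. f (Phi z))"
  unfolding G_def
  by (rule integrable_distr_eq[OF Phi_measurable assms], rule integral_distr[OF Phi_measurable assms])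

lemma G_in_M_set: "G \<in> M_set mu (outer_prod u u + (\<Sum>k\<in>UNIV. outer_prod (c k) (c k)))"
  unfolding M_set_def
proof (intro CollectI conjI allI)
  show "prob_space G" by (rule prob_space_G)
  show "sets G = sets borel" unfolding G_def by simp
  have N: "real CARD('n) > 0" by simp
  have Phi_nth: "Phi z $ i = mu $ i + V (fst z) $ i + u $ i * Z (snd z)" for z i
    unfolding Phi_def by simp
  fix i j
  have meas: "(\<lambda>x::real^'n. x $ i) \<in> borel_measurable borel"
    "(\<lambda>x::real^'n. x $ i * x $ j) \<in> borel_measurable borel"
    "(\<lambda>x::real^'n. (x $ i - mu $ i) * (x $ j - mu $ j)) \<in> borel_measurable borel"
    by (intro borel_measurable_continuous_onI continuous_intros)+
  have first: "(\<lambda>z. Phi z $ i) = (\<lambda>z. (\<lambda>kb. mu $ i + V kb $ i) (fst z)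
      + (\<lambda>kb. u $ i) (fst z) * Z (snd z) + (\<lambda>kb. 0) (fst z) * (Z (snd z))\<^sup>2)"
    by (simp add: Phi_nth algebra_simps)
  show "integrable G (\<lambda>x. x $ i)"
    unfolding integrable_G_iff[OF meas(1)] first by (rule integral_quadratic_in_Z(1))
  have "(\<integral>x. x $ i \<partial>G) = (\<Sum>kb\<in>UNIV. (mu $ i + V kb $ i) + 0) / (2 * real CARD('n))"
    unfolding integral_G[OF meas(1)] first by (rule integral_quadratic_in_Z(2))
  then show "(\<integral>x. x $ i \<partial>G) = mu $ i"
    using N by (simp add: sum_UNIV_times_bool V_def sum.distrib)
  have second: "(\<lambda>z. Phi z $ i * Phi z $ j) = (\<lambda>z. (\<lambda>kb. (mu $ i + V kb $ i) * (mu $ j + V kb $ j)) (fst z)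
      + (\<lambda>kb. (mu $ i + V kb $ i) * u $ j + (mu $ j + V kb $ j) * u $ i) (fst z) * Z (snd z)
      + (\<lambda>kb. u $ i * u $ j) (fst z) * (Z (snd z))\<^sup>2)"
    by (simp add: Phi_nth algebra_simps power2_eq_square)
  show "integrable G (\<lambda>x. x $ i * x $ j)"
    unfolding integrable_G_iff[OF meas(2)] second by (rule integral_quadratic_in_Z(1))
  have centered: "(\<lambda>z. (Phi z $ i - mu $ i) * (Phi z $ j - mu $ j)) = (\<lambda>z. (\<lambda>kb. V kb $ i * V kb $ j) (fst z)
      + (\<lambda>kb. V kb $ i * u $ j + V kb $ j * u $ i) (fst z) * Z (snd z)
      + (\<lambda>kb. u $ i * u $ j) (fst z) * (Z (snd z))\<^sup>2)"
    by (simp add: Phi_nth algebra_simps power2_eq_square)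
  have "(\<integral>x. (x $ i - mu $ i) * (x $ j - mu $ j) \<partial>G)
      = (\<Sum>kb\<in>UNIV. V kb $ i * V kb $ j + u $ i * u $ j) / (2 * real CARD('n))"
    unfolding integral_G[OF meas(3)] centered by (rule integral_quadratic_in_Z(2))
  also have "\<dots> = u $ i * u $ j + (\<Sum>k\<in>UNIV. c k $ i * c k $ j)"
    using N by (simp add: sum_UNIV_times_bool V_def sum.distrib sum_distrib_left field_simps)
  finally show "(\<integral>x. (x $ i - mu $ i) * (x $ j - mu $ j) \<partial>G)
      = (outer_prod u u + (\<Sum>k\<in>UNIV. outer_prod (c k) (c k))) $ i $ j"
    by (simp add: outer_prod_def)
qed

lemma distr_inner_G:
  assumes "w \<bullet> u = s" "\<forall>k. w \<bullet> c k = 0" "w \<bullet> mu = a"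
  shows "distr G borel (\<lambda>x. w \<bullet> x) = F"
proof -
  have "distr G borel (\<lambda>x. w \<bullet> x) = distr (P \<Otimes>\<^sub>M F) borel (\<lambda>z. w \<bullet> Phi z)"
    unfolding G_def by (subst distr_distr) (simp_all add: Phi_measurable comp_def)
  also have "\<dots> = distr (P \<Otimes>\<^sub>M F) F snd"
    using inner_Phi[OF assms] by (intro distr_cong) (simp_all add: sets_F)
  also have "\<dots> = F"
    using prob_space_F
    by (intro distr_pair_measure_snd prob_space_measure_pmf prob_space_imp_sigma_finite)
  finally show ?thesis .
qed

lemma Phi_reflect: "Phi (reflect z) = 2 *\<^sub>R mu - Phi z"
  unfolding Phi_def V_def Z_def reflect_def
  by (simp add: scaleR_2 algebra_simps diff_divide_distrib)

lemma reflect_measurable: "reflect \<in> measurable (P \<Otimes>\<^sub>M F) (count_space UNIV \<Otimes>\<^sub>M borel)"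
  unfolding reflect_def
  by (intro measurable_Pair measurable_compose[OF measurable_fst] measurable_compose[OF measurable_snd])
     (simp_all add: measurable_cong_sets[OF sets_F refl])

lemma distr_reflect_P_F:
  assumes F_reflect: "distr F borel (\<lambda>y. 2 * a - y) = F"
  shows "distr (P \<Otimes>\<^sub>M F) (count_space UNIV \<Otimes>\<^sub>M borel) reflect = P \<Otimes>\<^sub>M F"
proof -
  interpret F: prob_space F by (rule prob_space_F)
  define flip :: "'n \<times> bool \<Rightarrow> 'n \<times> bool" where "flip kb = (fst kb, \<not> snd kb)" for kb
  have "inj flip" unfolding flip_def inj_def by auto
  moreover have "range flip = UNIV" unfolding flip_def by (auto simp: image_iff)
  ultimately have "map_pmf flip signs = signs" unfolding signs_def by (simp add: map_pmf_of_set_inj)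
  then have P_flip: "distr P (count_space UNIV) flip = P" by (metis map_pmf_rep_eq)
  have reflect_eq: "reflect = (\<lambda>(kb, y). (flip kb, 2 * a - y))"
    unfolding reflect_def flip_def by auto
  have "distr (P \<Otimes>\<^sub>M F) (count_space UNIV \<Otimes>\<^sub>M borel) reflect
      = distr P (count_space UNIV) flip \<Otimes>\<^sub>M distr F borel (\<lambda>y. 2 * a - y)"
    unfolding reflect_eq
    by (rule pair_measure_distr[symmetric])
       (simp_all add: F_reflect F.sigma_finite_measure_axioms measurable_cong_sets[OF sets_F refl])
  then show ?thesis by (simp only: P_flip F_reflect)
qed

lemma G_symmetric:
  assumes "symmetric_real F"
  shows "symmetric_vec G"
proof -
  obtain b where "distr F borel (\<lambda>y. 2 * b - y) = F"
    using symmetric_real_imp_reflection_invariant[OF prob_space_F sets_F assms] by blast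
  moreover from this have "b = a"
    using reflection_center_eq_mean[OF F] mean by simp
  ultimately have F_reflect: "distr F borel (\<lambda>y. 2 * a - y) = F" by simp
  have Phi_meas: "Phi \<in> borel_measurable (count_space UNIV \<Otimes>\<^sub>M borel)"
    using Phi_measurable by (simp add: measurable_cong_sets[OF sets_P_F refl])
  have "distr G borel (\<lambda>x. 2 *\<^sub>R mu - x) = distr (P \<Otimes>\<^sub>M F) borel (\<lambda>z. Phi (reflect z))"
    unfolding G_def Phi_reflect by (subst distr_distr) (simp_all add: Phi_measurable comp_def)
  also have "\<dots> = distr (distr (P \<Otimes>\<^sub>M F) (count_space UNIV \<Otimes>\<^sub>M borel) reflect) borel Phi"
    by (subst distr_distr[OF Phi_meas reflect_measurable]) (simp add: comp_def)
  also have "\<dots> = G" unfolding distr_reflect_P_F[OF F_reflect] G_def ..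
  finally show ?thesis by (rule reflection_invariant_imp_symmetric_vec[rotated]) (simp add: G_def)
qed

end

lemma integral_neg_part_distr_inner:
  fixes G :: "(real^'n) measure"
  assumes "sets G = sets borel"
  shows "(\<integral>x. max (- (w \<bullet> x - t)) 0 \<partial>G) = (\<integral>y. max (- (y - t)) 0 \<partial>distr G borel (\<lambda>x. w \<bullet> x))"
  by (rule integral_distr[OF inner_measurable[OF assms], symmetric]) simp

lemma distr_inner_in_L_lam:
  fixes S :: "real^'n^'n" and mu w :: "real^'n"
  assumes G: "G \<in> M_w_lam (M_set mu S) t lam w" and nonneg: "0 \<le> w \<bullet> (S *v w)"
  shows "distr G borel (\<lambda>x. w \<bullet> x) \<in> L_lam t lam (w \<bullet> mu) (sqrt (w \<bullet> (S *v w)))"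
  using G nonneg distr_inner_M_set[of G mu S w] integral_neg_part_distr_inner[of G w t]
  unfolding M_w_lam_def L_lam_def M_set_def by auto

lemma L_lam_lift:
  fixes S :: "real^'n^'n" and mu w :: "real^'n"
  assumes S: "pos_semidef S" and pos: "0 < w \<bullet> (S *v w)"
    and F_in: "F \<in> L_lam t lam (w \<bullet> mu) (sqrt (w \<bullet> (S *v w)))"
  shows "\<exists>G \<in> M_w_lam (M_set mu S) t lam w.
      distr G borel (\<lambda>x. w \<bullet> x) = F \<and> (symmetric_real F \<longrightarrow> symmetric_vec G)"
proof -
  define s where "s = sqrt (w \<bullet> (S *v w))"
  obtain u c where wu: "w \<bullet> u = s" and wc: "\<forall>k::'n. w \<bullet> c k = 0"
    and S_eq: "S = outer_prod u u + (\<Sum>k\<in>UNIV. outer_prod (c k) (c k))"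
    using pos_semidef_decomp_along[OF S, of w] unfolding s_def by blast
  interpret lift_along F "w \<bullet> mu" s mu u c
    using F_in pos unfolding L_lam_def s_def by unfold_locales auto
  have proj: "distr G borel (\<lambda>x. w \<bullet> x) = F" by (rule distr_inner_G[OF wu wc refl])
  moreover have "G \<in> M_w_lam (M_set mu S) t lam w"
    using G_in_M_set F_in integral_neg_part_distr_inner[of G w t] proj
    unfolding S_eq M_w_lam_def L_lam_def by (simp add: G_def)
  ultimately show ?thesis using G_symmetric by blast
qed

lemma image_distr_inner_M_w_lam:
  fixes S :: "real^'n^'n" and mu w :: "real^'n"
  assumes S: "pos_semidef S" and pos: "0 < w \<bullet> (S *v w)"
  shows "(\<lambda>G. distr G borel (\<lambda>x. w \<bullet> x)) ` M_w_lam (M_set mu S) t lam w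
      = L_lam t lam (w \<bullet> mu) (sqrt (w \<bullet> (S *v w)))" (is "?proj ` _ = ?L")
    and "(\<lambda>G. distr G borel (\<lambda>x. w \<bullet> x)) ` M_w_lam (MS_set mu S) t lam w
      = LS_lam t lam (w \<bullet> mu) (sqrt (w \<bullet> (S *v w)))" (is "_ = ?LS")
proof -
  note proj = distr_inner_in_L_lam[OF _ less_imp_le[OF pos]]
  note lift = L_lam_lift[OF S pos]
  show "?proj ` M_w_lam (M_set mu S) t lam w = ?L"
    using proj lift by blast
  show "?proj ` M_w_lam (MS_set mu S) t lam w = ?LS"
  proof (intro equalityI subsetI)
    fix F assume "F \<in> ?proj ` M_w_lam (MS_set mu S) t lam w"
    then obtain G where G: "G \<in> M_w_lam (MS_set mu S) t lam w" and F: "F = ?proj G" by blast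
    then have "G \<in> M_w_lam (M_set mu S) t lam w" "symmetric_vec G" "prob_space G" "sets G = sets borel"
      unfolding M_w_lam_def MS_set_def M_set_def by auto
    then show "F \<in> ?LS"
      unfolding LS_lam_def F using proj symmetric_real_distr_inner by blast
  next
    fix F assume "F \<in> ?LS"
    then obtain G where "G \<in> M_w_lam (M_set mu S) t lam w" "symmetric_vec G" "?proj G = F"
      unfolding LS_lam_def using lift by blast
    then show "F \<in> ?proj ` M_w_lam (MS_set mu S) t lam w"
      unfolding M_w_lam_def MS_set_def by blast
  qed
qed

lemma worst_obj_eq_SUP_distr_inner:
  assumes "\<And>G. G \<in> M \<Longrightarrow> sets G = sets borel"
  shows "worst_obj M t lam w = (SUP F \<in> (\<lambda>G. distr G borel (\<lambda>x. w \<bullet> x)) ` M_w_lam M t lam w. upper_sq t F)"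
  unfolding worst_obj_def image_image upper_sq_def M_w_lam_def
  by (intro SUP_cong refl nn_integral_distr[OF inner_measurable, symmetric]) (auto simp: assms)

lemma worst_obj_eq_h_lam:
  fixes S :: "real^'n^'n" and mu w :: "real^'n"
  assumes "pos_def S" and "w \<in> W_plus"
  shows "worst_obj (M_set mu S) t lam w = h_lam lam t (w \<bullet> mu) (sqrt (w \<bullet> (S *v w)))"
    and "worst_obj (MS_set mu S) t lam w = hS_lam lam t (w \<bullet> mu) (sqrt (w \<bullet> (S *v w)))"
proof -
  have "w \<noteq> 0" using assms(2) unfolding W_plus_def by auto
  then have "0 < w \<bullet> (S *v w)" using assms(1) unfolding pos_def_def by blast
  note image = image_distr_inner_M_w_lam[OF pos_def_imp_pos_semidef[OF assms(1)] this]
  show "worst_obj (M_set mu S) t lam w = h_lam lam t (w \<bullet> mu) (sqrt (w \<bullet> (S *v w)))"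
    unfolding h_lam_def image(1)[symmetric]
    by (rule worst_obj_eq_SUP_distr_inner) (simp add: M_set_def)
  show "worst_obj (MS_set mu S) t lam w = hS_lam lam t (w \<bullet> mu) (sqrt (w \<bullet> (S *v w)))"
    unfolding hS_lam_def image(2)[symmetric]
    by (rule worst_obj_eq_SUP_distr_inner) (simp add: MS_set_def M_set_def)
qed

lemma is_argmin_on_cong:
  "(\<And>v. v \<in> A \<Longrightarrow> f v = g v) \<Longrightarrow> is_argmin_on f A w \<longleftrightarrow> is_argmin_on g A w"
  unfolding is_argmin_on_def by auto

theorem proposition6:
  fixes mu :: "real^'n" and Sigma :: "real^'n^'n" and t lam :: real
  assumes "CARD('n) \<ge> 2"
    and "pos_def Sigma"
    and "lam > 0"
    and "max (- (Min (range (\<lambda>i. mu $ i)) - t)) 0 \<le> lam"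
  shows "(\<forall>w. is_argmin_on (worst_obj (M_set mu Sigma) t lam) W_plus w \<longleftrightarrow>
              is_argmin_on (\<lambda>v. h_lam lam t (v \<bullet> mu) (sqrt (v \<bullet> (Sigma *v v)))) W_plus w)
       \<and> (\<forall>w. is_argmin_on (worst_obj (MS_set mu Sigma) t lam) W_plus w \<longleftrightarrow>
              is_argmin_on (\<lambda>v. hS_lam lam t (v \<bullet> mu) (sqrt (v \<bullet> (Sigma *v v)))) W_plus w)"
  using worst_obj_eq_h_lam[OF assms(2)] by (auto intro!: is_argmin_on_cong)

end
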